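(* There exist a polynomial $p$ and a constant $c>0$ such that for every integer $k\geq 1$ there exist an approval election $E=(N,C,(A_v)_{v\in N},k)$ with $|N|\le p(k)$ voters, a committee $W_0\subseteq C$ with $|W_0|=k$, and a valid sequence of swaps $(a_1,b_1),\dots,(a_s,b_s)$ starting from $W_0$ with $s\ge c\,k^{\log k}$ (i.e., of length $\Omega(k^{\log k})$) such that every swap in the sequence strictly increases the PAV score, i.e., $\Delta(W_{t-1},a_t,b_t)>0$ for all $t\in[s]$.
   Context: An approval election is a tuple $E=(N,C,(A_v)_{v\in N},k)$ where $N=[n]$ is a set of voters, $C$ is a finite set of candidates, $A_v\subseteq C$ is the approval ballot of voter $v$, and $k\in[|C|]$ is the target committee size. A committee is a subset of $C$. The PAV score of a committee $W$ is $\textsc{pavsc}(W)=\sum_{v\in N}\sum_{j=1}^{|A_v\cap W|}\frac{1}{j}$. For $a\in W$, $b\notin W$, let $\Delta(W,a,b)=\textsc{pavsc}((W\setminus\{a\})\cup\{b\})-\textsc{pavsc}(W)$. A sequence of swaps $(a_1,b_1),\dots,(a_s,b_s)$ is valid starting from $W_0$ if, setting $W_t=(W_{t-1}\cup\{b_t\})\setminus\{a_t\}$, we have $a_t\in W_{t-1}$ and $b_t\notin W_{t-1}$ for every $t\in[s]$. Here $\log$ denotes the base-2 logarithm. *)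

theory Defs
  imports Complex_Main "HOL-Computational_Algebra.Polynomial"
begin

definition is_election :: "nat \<Rightarrow> nat set \<Rightarrow> (nat \<Rightarrow> nat set) \<Rightarrow> nat \<Rightarrow> bool" where
  "is_election n C A k \<longleftrightarrow> finite C \<and> (\<forall>v\<in>{1..n}. A v \<subseteq> C) \<and> 1 \<le> k \<and> k \<le> card C"

definition pavsc :: "nat \<Rightarrow> (nat \<Rightarrow> nat set) \<Rightarrow> nat set \<Rightarrow> real" where
  "pavsc n A W = (\<Sum>v\<in>{1..n}. \<Sum>j=1..card (A v \<inter> W). 1 / real j)"

definition swap :: "nat set \<Rightarrow> nat \<Rightarrow> nat \<Rightarrow> nat set" where
  "swap W a b = (W \<union> {b}) - {a}"

definition pav_delta :: "nat \<Rightarrow> (nat \<Rightarrow> nat set) \<Rightarrow> nat set \<Rightarrow> nat \<Rightarrow> nat \<Rightarrow> real" where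
  "pav_delta n A W a b = pavsc n A (swap W a b) - pavsc n A W"

fun valid_swaps :: "nat set \<Rightarrow> nat set \<Rightarrow> (nat \<times> nat) list \<Rightarrow> bool" where
  "valid_swaps C W [] = True"
| "valid_swaps C W ((a, b) # rest) =
     (a \<in> W \<and> b \<in> C \<and> b \<notin> W \<and> valid_swaps C (swap W a b) rest)"

fun improving_swaps :: "nat \<Rightarrow> (nat \<Rightarrow> nat set) \<Rightarrow> nat set \<Rightarrow> (nat \<times> nat) list \<Rightarrow> bool" where
  "improving_swaps n A W [] = True"
| "improving_swaps n A W ((a, b) # rest) =
     (pav_delta n A W a b > 0 \<and> improving_swaps n A (swap W a b) rest)"

end

theory Submission
  imports Defs "HOL-Library.Discrete_Functions"
begin

(* All committees consist of the core {1..<k} plus one slot candidate k + t. A voter approving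
   y - 1 core members and some slots gains 1/y exactly when one of its slots is in the committee, so along
   the swaps t -> t + 1 the PAV score is, up to a constant, the slot utility: the sum of 1/y over the
   voters approving slot t. It therefore suffices to find few voters with weights y <= k whose
   utility increases strictly over many slots.
   Write t in base R with M digits. The d-th difference d!/(x(x+1)...(x+d)) of 1/x is a signed sum
   of 2^d reciprocals 1/y with x <= y <= x + d; taking each term R - 1 times with thresholds on
   digit i lets digit i contribute its value times the (M-1-i)-th difference. For x = R M consecutive
   differences shrink by a factor of at least R, so the utility is lexicographic in the digits and
   increases over all R^M slots. With R = 2^h, M = 4h and 4^h close to k this gives O(k^3) voters
   and 2^(4h^2) >= k^(log k) swaps. *)

section \<open>Improving swap sequences from slot utilities\<close>

definition pav_improving_run :: "nat \<Rightarrow> nat \<Rightarrow> nat \<Rightarrow> bool" where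
  "pav_improving_run k n s \<longleftrightarrow> (\<exists>C A W0 sw. is_election n C A k \<and> W0 \<subseteq> C \<and> card W0 = k \<and>
     valid_swaps C W0 sw \<and> improving_swaps n A W0 sw \<and> length sw = s)"

lemma valid_swaps_chain:
  assumes "t0 \<le> t1"
    and "\<And>t. t0 \<le> t \<Longrightarrow> t < t1 \<Longrightarrow>
           a t \<in> W t \<and> b t \<in> C \<and> b t \<notin> W t \<and> swap (W t) (a t) (b t) = W (Suc t)"
  shows "valid_swaps C (W t0) (map (\<lambda>t. (a t, b t)) [t0..<t1])"
  using assms by (induction t0 rule: inc_induct) (auto simp: upt_conv_Cons)

lemma improving_swaps_chain:
  assumes "t0 \<le> t1"
    and "\<And>t. t0 \<le> t \<Longrightarrow> t < t1 \<Longrightarrow>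
           swap (W t) (a t) (b t) = W (Suc t) \<and> pavsc n A (W t) < pavsc n A (W (Suc t))"
  shows "improving_swaps n A (W t0) (map (\<lambda>t. (a t, b t)) [t0..<t1])"
  using assms by (induction t0 rule: inc_induct) (auto simp: upt_conv_Cons pav_delta_def)

definition slot_utility :: "(nat \<times> (nat \<Rightarrow> bool)) list \<Rightarrow> nat \<Rightarrow> real" where
  "slot_utility vs s = (\<Sum>(y, P)\<leftarrow>vs. if P s then 1 / real y else 0)"

lemma slot_utility_append: "slot_utility (xs @ ys) s = slot_utility xs s + slot_utility ys s"
  by (simp add: slot_utility_def)

lemma slot_utility_concat: "slot_utility (concat xss) s = (\<Sum>xs\<leftarrow>xss. slot_utility xs s)"
  by (induction xss) (simp_all add: slot_utility_append, simp add: slot_utility_def)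

definition slot_ballot :: "nat \<Rightarrow> nat \<Rightarrow> nat \<times> (nat \<Rightarrow> bool) \<Rightarrow> nat set" where
  "slot_ballot k S = (\<lambda>(y, P). {1..<y} \<union> {k + s | s. s < S \<and> P s})"

definition slot_committee :: "nat \<Rightarrow> nat \<Rightarrow> nat set" where
  "slot_committee k t = {1..<k} \<union> {k + t}"

lemma card_slot_ballot_inter_committee:
  assumes "y \<le> k" "t < S"
  shows "card (slot_ballot k S (y, P) \<inter> slot_committee k t) = y - 1 + (if P t then 1 else 0)"
proof -
  have "slot_ballot k S (y, P) \<inter> slot_committee k t = {1..<y} \<union> (if P t then {k + t} else {})"
    using assms by (auto simp: slot_ballot_def slot_committee_def)
  then show ?thesis
    using assms by auto
qed

lemma harmonic_sum_Suc_pred: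
  "1 \<le> y \<Longrightarrow> (\<Sum>j = 1..y. 1 / real j) = (\<Sum>j = 1..y - 1. 1 / real j) + 1 / real y"
  by (cases y) (auto simp: sum.cl_ivl_Suc)

lemma sum_atLeastAtMost_nth: "(\<Sum>v = 1..length xs. f (xs ! (v - 1))) = (\<Sum>x\<leftarrow>xs. f x)"
  by (simp add: sum.atLeast1_atMost_eq sum_list_sum_nth atLeast0LessThan)

lemma pavsc_slot_committee:
  assumes "\<forall>(y, P)\<in>set vs. 1 \<le> y \<and> y \<le> k" "t < S"
  shows "pavsc (length vs) (\<lambda>v. slot_ballot k S (vs ! (v - 1))) (slot_committee k t)
           = (\<Sum>(y, P)\<leftarrow>vs. \<Sum>j = 1..y - 1. 1 / real j) + slot_utility vs t"
proof -
  have summand: "(\<Sum>j = 1..card (slot_ballot k S p \<inter> slot_committee k t). 1 / real j)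
          = (case p of (y, P) \<Rightarrow> (\<Sum>j = 1..y - 1. 1 / real j) + (if P t then 1 / real y else 0))"
    if "p \<in> set vs" for p
  proof (cases p)
    case (Pair y P)
    with assms that have "1 \<le> y" "y \<le> k"
      by auto
    with Pair \<open>t < S\<close> show ?thesis
      using harmonic_sum_Suc_pred[of y] by (simp add: card_slot_ballot_inter_committee)
  qed
  have "pavsc (length vs) (\<lambda>v. slot_ballot k S (vs ! (v - 1))) (slot_committee k t)
      = (\<Sum>p\<leftarrow>vs. \<Sum>j = 1..card (slot_ballot k S p \<inter> slot_committee k t). 1 / real j)"
    unfolding pavsc_def by (rule sum_atLeastAtMost_nth)
  also have "\<dots> = (\<Sum>p\<leftarrow>vs. case p of (y, P) \<Rightarrow>
                      (\<Sum>j = 1..y - 1. 1 / real j) + (if P t then 1 / real y else 0))"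
    using summand by (intro arg_cong[where f = sum_list] map_cong) simp_all
  finally show ?thesis
    by (simp add: slot_utility_def sum_list_addf case_prod_unfold)
qed

lemma pav_improving_run_of_slot_utility:
  assumes "1 \<le> k" "\<forall>(y, P)\<in>set vs. 1 \<le> y \<and> y \<le> k" "1 \<le> S"
    and "\<And>s. s + 1 < S \<Longrightarrow> slot_utility vs s < slot_utility vs (s + 1)"
  shows "pav_improving_run k (length vs) (S - 1)"
proof -
  define C where "C = {1..<k + S}"
  define A where "A = (\<lambda>v. slot_ballot k S (vs ! (v - 1)))"
  define sw where "sw = map (\<lambda>t. (k + t, k + Suc t)) [0..<S - 1]"
  have step: "swap (slot_committee k t) (k + t) (k + Suc t) = slot_committee k (Suc t)" for t
    using \<open>1 \<le> k\<close> by (auto simp: swap_def slot_committee_def)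
  have "slot_ballot k S p \<subseteq> C" if "p \<in> set vs" for p
    using assms(2) that by (auto simp: slot_ballot_def C_def)
  moreover have "vs ! (v - 1) \<in> set vs" if "v \<in> {1..length vs}" for v
    using that by (intro nth_mem) auto
  ultimately have "A v \<subseteq> C" if "v \<in> {1..length vs}" for v
    using that by (simp add: A_def)
  then have "is_election (length vs) C A k"
    using assms(1,3) by (simp add: is_election_def C_def)
  moreover have "slot_committee k 0 \<subseteq> C" "card (slot_committee k 0) = k"
    using assms(1,3) by (auto simp: C_def slot_committee_def)
  moreover have "valid_swaps C (slot_committee k 0) sw"
    unfolding sw_def using step
    by (intro valid_swaps_chain[where W = "slot_committee k"]) (auto simp: C_def slot_committee_def)
  moreover have "improving_swaps (length vs) A (slot_committee k 0) sw"
    unfolding sw_def A_def using step assms(4) pavsc_slot_committee[OF assms(2)]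
    by (intro improving_swaps_chain[where W = "slot_committee k"]) auto
  moreover have "length sw = S - 1"
    by (simp add: sw_def)
  ultimately show ?thesis
    unfolding pav_improving_run_def
    by (intro exI[of _ C] exI[of _ A] exI[of _ "slot_committee k 0"] exI[of _ sw]) simp
qed

lemma pav_improving_run_one_swap: "1 \<le> k \<Longrightarrow> pav_improving_run k 1 1"
  using pav_improving_run_of_slot_utility[of k "[(1, \<lambda>s. 0 < s)]" 2]
  by (simp add: slot_utility_def)

section \<open>Finite differences of reciprocals\<close>

(* recip_diff d x is (-1)^d times the d-th forward difference of 1/x at x; the two lists hold the
   y whose reciprocal enters it with sign + and - respectively. *)
fun recip_diff_terms :: "nat \<Rightarrow> nat \<Rightarrow> nat list \<times> nat list" where
  "recip_diff_terms 0 x = ([x], [])"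
| "recip_diff_terms (Suc d) x =
     (fst (recip_diff_terms d x) @ snd (recip_diff_terms d (Suc x)),
      snd (recip_diff_terms d x) @ fst (recip_diff_terms d (Suc x)))"

definition recip_sum :: "nat list \<Rightarrow> real" where
  "recip_sum ys = (\<Sum>y\<leftarrow>ys. 1 / real y)"

definition recip_diff :: "nat \<Rightarrow> nat \<Rightarrow> real" where
  "recip_diff d x = recip_sum (fst (recip_diff_terms d x)) - recip_sum (snd (recip_diff_terms d x))"

lemma recip_diff_0: "recip_diff 0 x = 1 / real x"
  by (simp add: recip_diff_def recip_sum_def)

lemma recip_diff_Suc: "recip_diff (Suc d) x = recip_diff d x - recip_diff d (Suc x)"
  by (simp add: recip_diff_def recip_sum_def)

lemma recip_diff_eq: "1 \<le> x \<Longrightarrow> recip_diff d x = fact d / pochhammer (real x) (Suc d)"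
proof (induction d arbitrary: x)
  case 0
  then show ?case
    by (simp add: recip_diff_0)
next
  case (Suc d)
  define P where "P = pochhammer (real x + 1) d"
  have "P > 0" "real x > 0"
    using Suc.prems unfolding P_def by (auto intro: pochhammer_pos)
  have "recip_diff (Suc d) x = fact d / pochhammer (real x) (Suc d) - fact d / pochhammer (real x + 1) (Suc d)"
    using Suc.IH[of x] Suc.IH[of "Suc x"] Suc.prems by (simp add: recip_diff_Suc add.commute)
  also have "\<dots> = fact d / (real x * P) - fact d / ((real x + 1 + real d) * P)"
    unfolding P_def pochhammer_rec[of "real x"] pochhammer_rec'[of "real x + 1"] ..
  also have "\<dots> = fact (Suc d) / (real x * ((real x + 1 + real d) * P))"
    using \<open>P > 0\<close> \<open>real x > 0\<close> by (simp add: divide_simps) (simp add: algebra_simps)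
  also have "\<dots> = fact (Suc d) / pochhammer (real x) (Suc (Suc d))"
    unfolding P_def pochhammer_rec[of "real x" "Suc d"] pochhammer_rec'[of "real x + 1" d] ..
  finally show ?case .
qed

lemma recip_diff_pos: "1 \<le> x \<Longrightarrow> recip_diff d x > 0"
  by (simp add: recip_diff_eq pochhammer_pos)

lemma recip_diff_Suc_eq:
  "1 \<le> x \<Longrightarrow> recip_diff (Suc d) x = recip_diff d x * real (Suc d) / (real x + real (Suc d))"
  using pochhammer_rec'[of "real x" "Suc d"]
  by (simp add: recip_diff_eq fact_Suc field_simps)

lemma recip_diff_Suc_growth:
  assumes "1 \<le> x" "real R * real (Suc d) \<le> real x + real (Suc d)"
  shows "real R * recip_diff (Suc d) x \<le> recip_diff d x"
proof -
  have "real R * recip_diff (Suc d) x = recip_diff d x * (real R * real (Suc d) / (real x + real (Suc d)))"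
    using assms(1) by (simp add: recip_diff_Suc_eq)
  also have "\<dots> \<le> recip_diff d x * 1"
    using assms recip_diff_pos[OF assms(1), of d] by (intro mult_left_mono) auto
  finally show ?thesis
    by simp
qed

lemma recip_diff_terms_bounds:
  "y \<in> set (fst (recip_diff_terms d x)) \<union> set (snd (recip_diff_terms d x)) \<Longrightarrow> x \<le> y \<and> y \<le> x + d"
  by (induction d arbitrary: x) (auto, fastforce+)

lemma length_recip_diff_terms:
  "length (fst (recip_diff_terms d x)) + length (snd (recip_diff_terms d x)) = 2 ^ d"
proof (induction d arbitrary: x)
  case (Suc d)
  show ?case
    using Suc[of x] Suc[of "Suc x"] by simp
qed simp

section \<open>Voters encoding base-R digits\<close>

definition threshold_voters :: "(nat \<Rightarrow> nat) \<Rightarrow> nat \<Rightarrow> nat list \<Rightarrow> (nat \<times> (nat \<Rightarrow> bool)) list" where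
  "threshold_voters a m ys = concat (map (\<lambda>y. map (\<lambda>c. (y, \<lambda>s. c < a s)) [0..<m]) ys)"

lemma sum_list_upt_threshold:
  "(\<Sum>c\<leftarrow>[0..<m]. if c < a then r else 0) = real (min a m) * (r :: real)"
  by (induction m) (auto simp: min_def algebra_simps le_Suc_eq)

lemma slot_utility_threshold_voters:
  "slot_utility (threshold_voters a m ys) s = real (min (a s) m) * recip_sum ys"
proof (induction ys)
  case Nil
  then show ?case
    by (simp add: threshold_voters_def slot_utility_def recip_sum_def)
next
  case (Cons y ys)
  have "slot_utility (map (\<lambda>c. (y, \<lambda>s. c < a s)) [0..<m]) s = real (min (a s) m) * (1 / real y)"
    using sum_list_upt_threshold[where a = "a s" and r = "1 / real y"] by (simp add: slot_utility_def o_def)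
  with Cons show ?case
    by (simp add: threshold_voters_def slot_utility_append recip_sum_def algebra_simps)
qed

(* The negative terms approve by the complementary digit R - 1 - g, so they contribute a constant
   minus g times their reciprocal sum. *)
definition digit_voters :: "nat \<Rightarrow> nat \<Rightarrow> nat \<Rightarrow> nat \<Rightarrow> (nat \<times> (nat \<Rightarrow> bool)) list" where
  "digit_voters R d x i =
     threshold_voters (\<lambda>s. s div R ^ i mod R) (R - 1) (fst (recip_diff_terms d x)) @
     threshold_voters (\<lambda>s. R - 1 - s div R ^ i mod R) (R - 1) (snd (recip_diff_terms d x))"

definition digit_profile :: "nat \<Rightarrow> nat \<Rightarrow> nat \<Rightarrow> (nat \<times> (nat \<Rightarrow> bool)) list" where
  "digit_profile R M x = concat (map (\<lambda>i. digit_voters R (M - 1 - i) x i) [0..<M])"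

definition digit_sum :: "nat \<Rightarrow> (nat \<Rightarrow> real) \<Rightarrow> nat \<Rightarrow> nat \<Rightarrow> real" where
  "digit_sum R E m s = (\<Sum>i<m. real (s div R ^ i mod R) * E i)"

lemma slot_utility_digit_voters:
  assumes "0 < R"
  shows "slot_utility (digit_voters R d x i) s
           = real (s div R ^ i mod R) * recip_diff d x + real (R - 1) * recip_sum (snd (recip_diff_terms d x))"
proof -
  define g where "g = s div R ^ i mod R"
  have "g < R"
    unfolding g_def using assms by simp
  then have "real (R - 1 - g) = real (R - 1) - real g"
    by linarith
  then show ?thesis
    unfolding digit_voters_def slot_utility_append slot_utility_threshold_voters g_def[symmetric]
    using \<open>g < R\<close> by (simp add: recip_diff_def min_absorb1 algebra_simps)
qed

lemma slot_utility_digit_profile: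
  assumes "0 < R"
  shows "slot_utility (digit_profile R M x) s = digit_sum R (\<lambda>i. recip_diff (M - 1 - i) x) M s
           + (\<Sum>i<M. real (R - 1) * recip_sum (snd (recip_diff_terms (M - 1 - i) x)))"
  by (simp add: digit_profile_def slot_utility_concat slot_utility_digit_voters[OF assms]
      digit_sum_def sum_list_sum_nth atLeast0LessThan sum.distrib o_def)

lemma digit_sum_Suc:
  "digit_sum R E (Suc m) s = real (s mod R) * E 0 + digit_sum R (\<lambda>i. E (Suc i)) m (s div R)"
  unfolding digit_sum_def sum.lessThan_Suc_shift by (simp add: div_mult2_eq)

lemma digit_sum_gap:
  assumes "0 < R" "\<And>i. i < m \<Longrightarrow> 0 < E i" "\<And>i. Suc i < m \<Longrightarrow> real R * E i \<le> E (Suc i)"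
    and "s < s'" "s' < R ^ m"
  shows "digit_sum R E m s + E 0 \<le> digit_sum R E m s'"
  using assms(2-5)
proof (induction m arbitrary: E s s')
  case 0
  then show ?case
    by simp
next
  case (Suc m)
  have "0 < E 0"
    using Suc.prems(1) by simp
  show ?case
  proof (cases "s div R = s' div R")
    case True
    then have "s mod R < s' mod R"
      using \<open>s < s'\<close> by (metis div_mult_mod_eq nat_add_left_cancel_less)
    then have "(real (s mod R) + 1) * E 0 \<le> real (s' mod R) * E 0"
      using \<open>0 < E 0\<close> by (intro mult_right_mono) auto
    then show ?thesis
      unfolding digit_sum_Suc True by (simp add: algebra_simps)
  next
    case False
    then have "s div R < s' div R"
      using \<open>s < s'\<close> div_le_mono[of s s' R] by linarith
    moreover have "s' div R < R ^ m"
      using Suc.prems(4) assms(1) by (simp add: div_less_iff_less_mult mult.commute)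
    ultimately have "0 < m"
      by (cases m) auto
    have IH: "digit_sum R (\<lambda>i. E (Suc i)) m (s div R) + E 1 \<le> digit_sum R (\<lambda>i. E (Suc i)) m (s' div R)"
      using Suc.IH[of "\<lambda>i. E (Suc i)"] Suc.prems(1,2) \<open>s div R < s' div R\<close> \<open>s' div R < R ^ m\<close>
      by simp
    have "s mod R < R"
      using assms(1) by simp
    then have "(real (s mod R) + 1) * E 0 \<le> real R * E 0"
      using \<open>0 < E 0\<close> by (intro mult_right_mono) auto
    also have "\<dots> \<le> E 1"
      using Suc.prems(2)[of 0] \<open>0 < m\<close> by simp
    finally have "real (s mod R) * E 0 + E 0 \<le> E 1"
      by (simp add: algebra_simps)
    moreover have "0 \<le> real (s' mod R) * E 0"
      using \<open>0 < E 0\<close> by simp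
    ultimately show ?thesis
      unfolding digit_sum_Suc using IH by linarith
  qed
qed

lemma slot_utility_digit_profile_strict_mono:
  assumes "0 < R" "0 < M" "s + 1 < R ^ M"
  shows "slot_utility (digit_profile R M (R * M)) s < slot_utility (digit_profile R M (R * M)) (s + 1)"
proof -
  define E where "E i = recip_diff (M - 1 - i) (R * M)" for i
  have "1 \<le> R * M"
    using assms(1,2) by simp
  then have "0 < E i" for i
    unfolding E_def by (rule recip_diff_pos)
  moreover have "real R * E i \<le> E (Suc i)" if "Suc i < M" for i
  proof -
    have d: "M - 1 - i = Suc (M - 1 - Suc i)"
      using that by simp
    have "R * (M - 1 - i) \<le> R * M + (M - 1 - i)"
      by (intro trans_le_add1 mult_le_mono2) simp
    then have "real R * real (M - 1 - i) \<le> real (R * M) + real (M - 1 - i)"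
      by (simp only: of_nat_mult [symmetric] of_nat_add [symmetric] of_nat_le_iff)
    then show ?thesis
      unfolding E_def d using \<open>1 \<le> R * M\<close> by (intro recip_diff_Suc_growth) (simp_all only: d)
  qed
  ultimately have "digit_sum R E M s + E 0 \<le> digit_sum R E M (s + 1)"
    using assms by (intro digit_sum_gap) auto
  with \<open>0 < E 0\<close> show ?thesis
    unfolding slot_utility_digit_profile[OF assms(1)] E_def by simp
qed

lemma digit_profile_bounds:
  assumes "(y, P) \<in> set (digit_profile R M x)"
  shows "x \<le> y \<and> y \<le> x + M"
proof -
  obtain i where "i < M" "(y, P) \<in> set (digit_voters R (M - 1 - i) x i)"
    using assms by (auto simp: digit_profile_def)
  then have "y \<in> set (fst (recip_diff_terms (M - 1 - i) x)) \<union> set (snd (recip_diff_terms (M - 1 - i) x))"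
    by (auto simp: digit_voters_def threshold_voters_def)
  with \<open>i < M\<close> show ?thesis
    using recip_diff_terms_bounds by fastforce
qed

lemma length_threshold_voters: "length (threshold_voters a m ys) = m * length ys"
  by (induction ys) (simp_all add: threshold_voters_def)

lemma length_digit_profile_le: "length (digit_profile R M x) \<le> M * R * 2 ^ M"
proof -
  have "length (digit_voters R (M - 1 - i) x i) \<le> R * 2 ^ M" for i
  proof -
    have "length (digit_voters R (M - 1 - i) x i) = (R - 1) * 2 ^ (M - 1 - i)"
      by (simp add: digit_voters_def length_threshold_voters length_recip_diff_terms
          flip: add_mult_distrib2)
    also have "\<dots> \<le> R * 2 ^ M"
      by (intro mult_le_mono power_increasing) auto
    finally show ?thesis .
  qed
  then have "(\<Sum>i<M. length (digit_voters R (M - 1 - i) x i)) \<le> (\<Sum>i<M. R * 2 ^ M)"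
    by (intro sum_mono)
  then show ?thesis
    by (simp add: digit_profile_def length_concat sum_list_sum_nth atLeast0LessThan)
qed

lemma pav_improving_run_digit_profile:
  assumes "0 < R" "0 < M" "M * (R + 1) \<le> k"
  shows "pav_improving_run k (length (digit_profile R M (R * M))) (R ^ M - 1)"
proof (rule pav_improving_run_of_slot_utility)
  show "1 \<le> k" "1 \<le> R ^ M"
    using assms by (simp_all add: Suc_le_eq)
  show "\<forall>(y, P)\<in>set (digit_profile R M (R * M)). 1 \<le> y \<and> y \<le> k"
  proof (clarify)
    fix y P assume "(y, P) \<in> set (digit_profile R M (R * M))"
    then have "R * M \<le> y \<and> y \<le> R * M + M"
      by (rule digit_profile_bounds)
    moreover have "1 \<le> R * M" "R * M + M \<le> k"
      using assms by (simp_all add: algebra_simps)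
    ultimately show "1 \<le> y \<and> y \<le> k"
      by linarith
  qed
  show "slot_utility (digit_profile R M (R * M)) s < slot_utility (digit_profile R M (R * M)) (s + 1)"
    if "s + 1 < R ^ M" for s
    using assms(1,2) that by (rule slot_utility_digit_profile_strict_mono)
qed

section \<open>Choice of parameters\<close>

lemma powr_log2_self_le:
  assumes "2 ^ L \<le> k" "k < 2 * 2 ^ L"
  shows "real k powr log 2 (real k) \<le> 2 ^ ((L + 1)\<^sup>2)"
proof -
  have "1 \<le> real k"
    using assms(1) by (metis one_le_numeral one_le_power of_nat_1 of_nat_le_iff order_trans)
  have "real k < 2 ^ (L + 1)"
    using assms(2) by (metis of_nat_less_iff of_nat_numeral of_nat_power power_Suc Suc_eq_plus1)
  then have "real k < 2 powr real (L + 1)"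
    by (simp only: powr_realpow)
  then have "log 2 (real k) \<le> real (L + 1)"
    using \<open>1 \<le> real k\<close> by (simp add: log_less_iff less_imp_le)
  have "real k powr log 2 (real k) = 2 powr (log 2 (real k) * log 2 (real k))"
    using \<open>1 \<le> real k\<close> by (simp add: powr_powr [symmetric])
  also have "\<dots> \<le> 2 powr (real (L + 1) * real (L + 1))"
    using \<open>1 \<le> real k\<close> \<open>log 2 (real k) \<le> real (L + 1)\<close> by (intro powr_mono mult_mono) auto
  also have "\<dots> = 2 ^ ((L + 1)\<^sup>2)"
    by (simp only: power2_eq_square of_nat_mult [symmetric] powr_realpow zero_less_numeral)
  finally show ?thesis .
qed

lemma linear_mult_pow2_le_pow4: "11 \<le> h \<Longrightarrow> 4 * h * (2 ^ h + 1) \<le> (4::nat) ^ (h - 2)"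
proof (induction h rule: nat_induct_at_least)
  case base
  then show ?case
    by simp
next
  case (Suc h)
  have "4 * Suc h * (2 ^ Suc h + 1) \<le> 4 * (2 * h) * (2 * (2 ^ h + 1))"
    using Suc.hyps by (intro mult_le_mono) auto
  also have "\<dots> = 4 * (4 * h * (2 ^ h + 1))"
    by simp
  also have "\<dots> \<le> 4 * 4 ^ (h - 2)"
    using Suc.IH by simp
  also have "\<dots> = 4 ^ (Suc h - 2)"
    using Suc.hyps by (simp flip: power_Suc add: Suc_diff_le)
  finally show ?case .
qed

lemma pav_improving_run_large:
  assumes "18 \<le> L" "2 ^ L \<le> k"
  shows "\<exists>n s. pav_improving_run k n s \<and> n \<le> 256 * k ^ 3 \<and> 2 ^ ((L + 1)\<^sup>2) \<le> s"
proof -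
  define h where "h = L div 2 + 2"
  define R :: nat where "R = 2 ^ h"
  define M where "M = 4 * h"
  have h: "11 \<le> h" "L + 3 \<le> 2 * h" "2 * h \<le> L + 4"
    using assms(1) unfolding h_def by auto
  have "M * (R + 1) \<le> 4 ^ (h - 2)"
    unfolding M_def R_def by (rule linear_mult_pow2_le_pow4[OF h(1)])
  also have "\<dots> = 2 ^ (2 * (h - 2))"
    by (simp add: power_mult)
  also have "\<dots> \<le> 2 ^ L"
    using h by (intro power_increasing) auto
  finally have MR: "M * (R + 1) \<le> k"
    using assms(2) by linarith
  have "(2::nat) ^ M \<le> 2 ^ (2 * L + 8)"
    using h unfolding M_def by (intro power_increasing) auto
  also have "\<dots> = 256 * (2 ^ L)\<^sup>2"
    by (simp add: power_add power_mult [symmetric] mult.commute)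
  also have "\<dots> \<le> 256 * k\<^sup>2"
    using assms(2) by (simp add: power_mono)
  finally have "M * R * 2 ^ M \<le> k * (256 * k\<^sup>2)"
    using MR by (intro mult_le_mono) auto
  then have n: "length (digit_profile R M (R * M)) \<le> 256 * k ^ 3"
    using length_digit_profile_le[of R M "R * M"] by (simp add: power2_eq_square power3_eq_cube)
  have "(L + 1)\<^sup>2 + 1 \<le> (L + 3)\<^sup>2"
    by (simp add: power2_eq_square algebra_simps)
  also have "\<dots> \<le> (2 * h)\<^sup>2"
    using h(2) by (rule power_mono) simp
  finally have "(L + 1)\<^sup>2 + 1 \<le> (2 * h)\<^sup>2" .
  then have "2 * 2 ^ ((L + 1)\<^sup>2) \<le> (2::nat) ^ (h * M)"
    unfolding M_def by (simp flip: power_Suc add: power_increasing power2_eq_square algebra_simps)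
  then have s: "2 ^ ((L + 1)\<^sup>2) \<le> R ^ M - 1"
    unfolding R_def power_mult by linarith
  have "pav_improving_run k (length (digit_profile R M (R * M))) (R ^ M - 1)"
    using MR unfolding R_def M_def using h(1) by (intro pav_improving_run_digit_profile) auto
  with n s show ?thesis
    by blast
qed

lemma pav_improving_run_superpoly:
  assumes "1 \<le> k"
  shows "\<exists>n s. pav_improving_run k n s \<and> n \<le> 256 * k ^ 3 \<and>
           real k powr log 2 (real k) \<le> 2 ^ 324 * real s"
proof -
  define L where "L = floor_log k"
  have "2 ^ L \<le> k" "k < 2 * 2 ^ L"
    using assms floor_log_exp2_le floor_log_exp2_gt unfolding L_def by auto
  then have bound: "real k powr log 2 (real k) \<le> 2 ^ ((L + 1)\<^sup>2)"
    by (rule powr_log2_self_le)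
  show ?thesis
  proof (cases "18 \<le> L")
    case True
    then obtain n s where run: "pav_improving_run k n s" "n \<le> 256 * k ^ 3"
      and "2 ^ ((L + 1)\<^sup>2) \<le> s"
      using pav_improving_run_large \<open>2 ^ L \<le> k\<close> by blast
    have "real k powr log 2 (real k) \<le> real (2 ^ ((L + 1)\<^sup>2))"
      using bound by simp
    also have "\<dots> \<le> real s"
      using \<open>2 ^ ((L + 1)\<^sup>2) \<le> s\<close> by (simp only: of_nat_le_iff)
    also have "\<dots> \<le> 2 ^ 324 * real s"
      by simp
    finally show ?thesis
      using run by blast
  next
    case False
    then have "(L + 1)\<^sup>2 \<le> 18\<^sup>2"
      by (intro power_mono) auto
    then have "real k powr log 2 (real k) \<le> 2 ^ 324 * real 1"
      using bound power_increasing[of "(L + 1)\<^sup>2" 324 "2::real"] by simp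
    moreover have "1 \<le> 256 * k ^ 3"
      using assms by simp
    ultimately show ?thesis
      using pav_improving_run_one_swap[OF assms] by blast
  qed
qed

theorem theorem3:
  shows "\<exists>(p :: real poly) (c :: real). c > 0 \<and>
    (\<forall>k :: nat. k \<ge> 1 \<longrightarrow>
      (\<exists>n C A W0 sw.
         is_election n C A k \<and> real n \<le> poly p (real k) \<and>
         W0 \<subseteq> C \<and> card W0 = k \<and>
         valid_swaps C W0 sw \<and> improving_swaps n A W0 sw \<and>
         real (length sw) \<ge> c * real k powr (log 2 (real k))))"
proof -
  have "\<exists>n C A W0 sw. is_election n C A k \<and> real n \<le> poly (monom 256 3) (real k) \<and>
          W0 \<subseteq> C \<and> card W0 = k \<and> valid_swaps C W0 sw \<and> improving_swaps n A W0 sw \<and>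
          real (length sw) \<ge> 1 / 2 ^ 324 * real k powr (log 2 (real k))" if k: "k \<ge> 1" for k
  proof -
    obtain n s where "pav_improving_run k n s" "n \<le> 256 * k ^ 3"
      and bound: "real k powr log 2 (real k) \<le> 2 ^ 324 * real s"
      using pav_improving_run_superpoly[OF k] by blast
    then obtain C A W0 sw where run: "is_election n C A k" "W0 \<subseteq> C" "card W0 = k"
      "valid_swaps C W0 sw" "improving_swaps n A W0 sw" "length sw = s"
      unfolding pav_improving_run_def by blast
    have "real n \<le> real (256 * k ^ 3)"
      using \<open>n \<le> 256 * k ^ 3\<close> by (simp only: of_nat_le_iff)
    then have "real n \<le> poly (monom 256 3) (real k)"
      by (simp add: poly_monom)
    moreover have "1 / 2 ^ 324 * real k powr log 2 (real k) \<le> real (length sw)"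
      using bound \<open>length sw = s\<close> by (simp add: field_simps)
    ultimately show ?thesis
      using run by blast
  qed
  moreover have "(1 / 2 ^ 324 :: real) > 0"
    by simp
  ultimately show ?thesis
    by blast
qed

end
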